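(* Let $G=(V,E,t)$ be a threshold graph with type partition $V_1,\dots,V_{\mathrm{nd}}$, and fix $i\in[\mathrm{nd}]$. (i) Let $X\subseteq V$ satisfy $X=D_{G[X]}$, let $Y=Y(X)$, and let $u_{\max}$ be a node of maximum threshold in $X\cap V_i$. If there exists $v\in Y\cap V_i$ with $t(v)\le t(u_{\max})$, then $X'=(X\setminus\{u_{\max}\})\cup\{v\}$ satisfies $X'=D_{G[X']}$ and $|Y(X')|=|Y|$. (ii) Let $Y\subseteq V$ and let $v_{\max}$ be a node of maximum threshold in $Y\cap V_i$. If there exists $u\in D_{G,Y}\cap V_i$ with $t(u)\le t(v_{\max})$, then $Y'=(Y\setminus\{v_{\max}\})\cup\{u\}$ satisfies $|D_{G,Y'}|\le|D_{G,Y}|$.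
   Context: A threshold graph is an undirected graph $G=(V,E,t)$ with threshold function $t:V\to\mathbb{N}$; $\Gamma_G(v)$ denotes the neighborhood of $v$. Given $Y\subseteq V$ (the immunized nodes), the diffusion process in $G$ is the sequence $D_{G,Y}[1]\subseteq D_{G,Y}[2]\subseteq\cdots$ with $D_{G,Y}[1]=\{u\in V\setminus Y: t(u)=0\}$ and $D_{G,Y}[\tau]=D_{G,Y}[\tau-1]\cup\{u\in V\setminus Y: |\Gamma_G(u)\cap D_{G,Y}[\tau-1]|\ge t(u)\}$; it stabilizes, and $D_{G,Y}$ denotes the final set. Write $D_G=D_{G,\emptyset}$. For $X\subseteq V$, $G[X]$ is the induced subgraph with thresholds restricted from $t$, and $Y(X)=\{u\in V\setminus X: |\Gamma_G(u)\cap D_{G[X]}|\ge t(u)\}$. Two nodes $u,v$ have the same type if $\Gamma_G(v)\setminus\{u\}=\Gamma_G(u)\setminus\{v\}$; a type partition $V_1,\dots,V_{\mathrm{nd}}$ is a partition of $V$ into classes whose nodes all have the same type. *)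

theory Defs
  imports Main
begin

definition threshold_graph :: "'a set \<Rightarrow> ('a \<Rightarrow> 'a \<Rightarrow> bool) \<Rightarrow> ('a \<Rightarrow> nat) \<Rightarrow> bool" where
  "threshold_graph V E t \<longleftrightarrow> finite V \<and> (\<forall>u v. E u v \<longrightarrow> u \<in> V \<and> v \<in> V)
     \<and> (\<forall>u v. E u v \<longrightarrow> E v u) \<and> (\<forall>u. \<not> E u u)"

text \<open>Neighbourhood of v in the graph with vertex set V (for an induced subgraph G[X],
  use V = X).\<close>
definition nbr :: "'a set \<Rightarrow> ('a \<Rightarrow> 'a \<Rightarrow> bool) \<Rightarrow> 'a \<Rightarrow> 'a set" where
  "nbr V E v = {u \<in> V. E v u}"

text \<open>diff_seq V E t Y k is D_{G,Y}[k+1] (the paper indexes from 1).\<close>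
fun diff_seq :: "'a set \<Rightarrow> ('a \<Rightarrow> 'a \<Rightarrow> bool) \<Rightarrow> ('a \<Rightarrow> nat) \<Rightarrow> 'a set \<Rightarrow> nat \<Rightarrow> 'a set" where
  "diff_seq V E t Y 0 = {u \<in> V - Y. t u = 0}"
| "diff_seq V E t Y (Suc k) = diff_seq V E t Y k \<union>
     {u \<in> V - Y. card (nbr V E u \<inter> diff_seq V E t Y k) \<ge> t u}"

definition diffusion :: "'a set \<Rightarrow> ('a \<Rightarrow> 'a \<Rightarrow> bool) \<Rightarrow> ('a \<Rightarrow> nat) \<Rightarrow> 'a set \<Rightarrow> 'a set" where
  "diffusion V E t Y = (\<Union>k. diff_seq V E t Y k)"

text \<open>Y(X) = {u in V \ X : |Gamma_G(u) \<inter> D_{G[X]}| \<ge> t(u)}, where G[X] has vertex set X,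
  adjacency restricted to X and the restricted thresholds.\<close>
definition Yset :: "'a set \<Rightarrow> ('a \<Rightarrow> 'a \<Rightarrow> bool) \<Rightarrow> ('a \<Rightarrow> nat) \<Rightarrow> 'a set \<Rightarrow> 'a set" where
  "Yset V E t X = {u \<in> V - X. card (nbr V E u \<inter> diffusion X E t {}) \<ge> t u}"

definition same_type :: "'a set \<Rightarrow> ('a \<Rightarrow> 'a \<Rightarrow> bool) \<Rightarrow> 'a \<Rightarrow> 'a \<Rightarrow> bool" where
  "same_type V E u v \<longleftrightarrow> nbr V E v - {u} = nbr V E u - {v}"

definition type_partition :: "'a set \<Rightarrow> ('a \<Rightarrow> 'a \<Rightarrow> bool) \<Rightarrow> (nat \<Rightarrow> 'a set) \<Rightarrow> nat \<Rightarrow> bool" where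
  "type_partition V E Vs nd \<longleftrightarrow>
     (\<Union>i\<in>{1..nd}. Vs i) = V
     \<and> (\<forall>i\<in>{1..nd}. Vs i \<noteq> {})
     \<and> (\<forall>i\<in>{1..nd}. \<forall>j\<in>{1..nd}. i \<noteq> j \<longrightarrow> Vs i \<inter> Vs j = {})
     \<and> (\<forall>i\<in>{1..nd}. \<forall>u\<in>Vs i. \<forall>v\<in>Vs i. same_type V E u v)"

end

theory Submission
  imports Defs "HOL-Combinatorics.Transposition"
begin

(* Two nodes of the same type are interchangeable: the transposition swapping them is an
   automorphism of the graph. Since the diffusion set is the least set closed under activation,
   diffusion can only grow along injective maps that preserve adjacency and do not raise
   thresholds. In (i) the transposition of umax and v maps X onto X' without raising thresholds
   (t v <= t umax), so X' activates itself; away from umax and v the numbers of active neighbours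
   in X and in X' agree, and umax, activated inside X, is also activated by X', whence
   Y(X') = Y(X) - {v} + {umax}. In (ii) the transposition of vmax and u maps D_{G,Y'}
   injectively into D_{G,Y}. *)

lemma diff_seq_subset: "diff_seq W E t Y k \<subseteq> W - Y"
  by (induction k) auto

lemma mono_diff_seq: "mono (diff_seq W E t Y)"
  unfolding mono_iff_le_Suc by auto

lemma diffusion_subset: "diffusion W E t Y \<subseteq> W - Y"
  unfolding diffusion_def by (intro UN_least diff_seq_subset)

lemma finite_nbr: "finite W \<Longrightarrow> finite (nbr W E x)"
  unfolding nbr_def by simp

lemma diffusion_closed:
  assumes "finite W" "x \<in> W - Y" "t x \<le> card (nbr W E x \<inter> diffusion W E t Y)"
  shows "x \<in> diffusion W E t Y"
proof -
  let ?A = "nbr W E x \<inter> diffusion W E t Y"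
  have "finite ?A"
    using finite_nbr[OF assms(1)] by blast
  moreover have "?A \<subseteq> (\<Union>k. diff_seq W E t Y k)"
    unfolding diffusion_def by blast
  ultimately obtain n where "?A \<subseteq> (\<Union>k<n. diff_seq W E t Y k)"
    by (rule finite_countable_subset)
  also have "\<dots> \<subseteq> diff_seq W E t Y n"
    by (intro UN_least monoD[OF mono_diff_seq]) simp
  finally have "?A \<subseteq> nbr W E x \<inter> diff_seq W E t Y n"
    by blast
  then have "card ?A \<le> card (nbr W E x \<inter> diff_seq W E t Y n)"
    by (rule card_mono[rotated]) (simp add: finite_nbr assms(1))
  then have "x \<in> diff_seq W E t Y (Suc n)"
    using assms(2,3) by simp
  then show ?thesis
    unfolding diffusion_def by blast
qed

lemma diffusion_least:
  assumes "finite W"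
    and closed: "\<And>x. x \<in> W - Y \<Longrightarrow> t x \<le> card (nbr W E x \<inter> S) \<Longrightarrow> x \<in> S"
  shows "diffusion W E t Y \<subseteq> S"
proof -
  have "diff_seq W E t Y k \<subseteq> S" for k
  proof (induction k)
    case 0
    show ?case
      using closed by auto
  next
    case (Suc k)
    have "card (nbr W E x \<inter> diff_seq W E t Y k) \<le> card (nbr W E x \<inter> S)" for x
      by (rule card_mono) (use Suc.IH finite_nbr[OF assms(1)] in auto)
    then have "x \<in> S" if "x \<in> W - Y" "t x \<le> card (nbr W E x \<inter> diff_seq W E t Y k)" for x
      using closed that le_trans by blast
    then show ?case
      using Suc.IH by auto
  qed
  then show ?thesis
    unfolding diffusion_def by blast
qed

lemma diffusion_supported:
  assumes "finite W" "x \<in> diffusion W E t Y"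
  shows "t x \<le> card (nbr W E x \<inter> diffusion W E t Y)"
proof -
  let ?D = "diffusion W E t Y"
  let ?S = "{x \<in> ?D. t x \<le> card (nbr W E x \<inter> ?D)}"
  have "?D \<subseteq> ?S"
  proof (rule diffusion_least[OF assms(1)])
    fix x
    assume x: "x \<in> W - Y" and le: "t x \<le> card (nbr W E x \<inter> ?S)"
    have "card (nbr W E x \<inter> ?S) \<le> card (nbr W E x \<inter> ?D)"
      by (rule card_mono) (auto simp: finite_nbr assms(1))
    with le have "t x \<le> card (nbr W E x \<inter> ?D)"
      by (rule le_trans)
    then show "x \<in> ?S"
      using diffusion_closed[OF assms(1) x] by blast
  qed
  then show ?thesis
    using assms(2) by blast
qed

lemma image_diffusion_subset:
  assumes "finite W" "finite W'"
    and inj: "inj_on f (W - Y)"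
    and maps: "f ` (W - Y) \<subseteq> W' - Y'"
    and adj: "\<And>x y. x \<in> W - Y \<Longrightarrow> y \<in> W - Y \<Longrightarrow> E x y \<Longrightarrow> E' (f x) (f y)"
    and thr: "\<And>x. x \<in> W - Y \<Longrightarrow> t' (f x) \<le> t x"
  shows "f ` diffusion W E t Y \<subseteq> diffusion W' E' t' Y'"
proof -
  let ?D' = "diffusion W' E' t' Y'"
  let ?S = "{x \<in> W - Y. f x \<in> ?D'}"
  have "diffusion W E t Y \<subseteq> ?S"
  proof (rule diffusion_least[OF assms(1)])
    fix x
    assume x: "x \<in> W - Y" and "t x \<le> card (nbr W E x \<inter> ?S)"
    have "t' (f x) \<le> t x"
      using thr[OF x] .
    also have "\<dots> \<le> card (nbr W E x \<inter> ?S)" by fact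
    also have "\<dots> = card (f ` (nbr W E x \<inter> ?S))"
      by (rule card_image[symmetric], rule inj_on_subset[OF inj]) auto
    also have "\<dots> \<le> card (nbr W' E' (f x) \<inter> ?D')"
      by (rule card_mono) (use finite_nbr[OF assms(2)] x maps adj in \<open>auto simp: nbr_def\<close>)
    finally show "x \<in> ?S"
      using x maps diffusion_closed[OF assms(2)] by auto
  qed
  then show ?thesis
    by blast
qed

lemma same_type_adj_transpose:
  assumes G: "threshold_graph V E t" and st: "same_type V E a b"
  shows "E (transpose a b x) (transpose a b y) \<longleftrightarrow> E x y"
proof -
  have sym: "E x y \<Longrightarrow> E y x" for x y
    using G unfolding threshold_graph_def by blast
  have irrefl: "\<not> E x x" for x
    using G unfolding threshold_graph_def by blast
  have swap: "E a w \<longleftrightarrow> E b w" if "w \<noteq> a" "w \<noteq> b" for w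
    using st that G unfolding same_type_def nbr_def threshold_graph_def by blast
  show ?thesis
    unfolding transpose_def using irrefl by (auto dest: sym swap[THEN iffD1] swap[THEN iffD2])
qed

lemma same_type_nbr_transpose:
  assumes G: "threshold_graph V E t" and st: "same_type V E a b"
    and "a \<in> V" "b \<in> V"
  shows "nbr V E (transpose a b x) = transpose a b ` nbr V E x"
proof -
  have "y \<in> nbr V E (transpose a b x) \<longleftrightarrow> transpose a b y \<in> nbr V E x" for y
  proof -
    have "transpose a b y \<in> V \<longleftrightarrow> y \<in> V"
      using assms(3,4) by (cases "y = a \<or> y = b") auto
    moreover have "E x (transpose a b y) \<longleftrightarrow> E (transpose a b x) y"
      using same_type_adj_transpose[OF G st, of x "transpose a b y"] by simp
    ultimately show ?thesis
      unfolding nbr_def by blast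
  qed
  then show ?thesis
    by (simp add: set_eq_iff in_transpose_image_iff)
qed

lemma transpose_image_exchange:
  assumes "a \<in> A" "b \<notin> A"
  shows "transpose a b ` A = A - {a} \<union> {b}"
  using assms by (auto simp: in_transpose_image_iff transpose_def)

lemma self_diffusing_exchange:
  assumes G: "threshold_graph V E t" and st: "same_type V E u v"
    and "finite X" and X: "diffusion X E t {} = X"
    and u: "u \<in> X" and v: "v \<notin> X" and "t v \<le> t u"
  shows "diffusion (X - {u} \<union> {v}) E t {} = X - {u} \<union> {v}"
proof -
  let ?X' = "X - {u} \<union> {v}"
  have "?X' = transpose u v ` diffusion X E t {}"
    using transpose_image_exchange[OF u v] X by simp
  also have "\<dots> \<subseteq> diffusion ?X' E t {}"
  proof (rule image_diffusion_subset)
    show "transpose u v ` (X - {}) \<subseteq> ?X' - {}"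
      using transpose_image_exchange[OF u v] by simp
    show "t (transpose u v x) \<le> t x" if "x \<in> X - {}" for x
      using that u v \<open>t v \<le> t u\<close> by (auto simp: transpose_def)
  qed (use same_type_adj_transpose[OF G st] \<open>finite X\<close> in auto)
  finally show ?thesis
    using diffusion_subset[of ?X' E t "{}"] by blast
qed

lemma card_Yset_exchange:
  assumes G: "threshold_graph V E t" and st: "same_type V E u v"
    and "X \<subseteq> V" and X: "diffusion X E t {} = X"
    and u: "u \<in> X" and v: "v \<in> Yset V E t X" and "t v \<le> t u"
  shows "card (Yset V E t (X - {u} \<union> {v})) = card (Yset V E t X)"
proof -
  let ?X' = "X - {u} \<union> {v}"
  have "finite V" and irrefl: "\<And>x. \<not> E x x"
    using G unfolding threshold_graph_def by auto
  then have "finite X"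
    using \<open>X \<subseteq> V\<close> finite_subset by blast
  have "u \<in> V" "v \<in> V" "v \<notin> X"
    using u v \<open>X \<subseteq> V\<close> unfolding Yset_def by auto
  have X': "diffusion ?X' E t {} = ?X'"
    using self_diffusing_exchange[OF G st \<open>finite X\<close> X u \<open>v \<notin> X\<close> \<open>t v \<le> t u\<close>] .
  have Yset_self_diffusing: "Yset V E t Z = {z \<in> V - Z. t z \<le> card (nbr V E z \<inter> Z)}"
    if "diffusion Z E t {} = Z" for Z
    unfolding Yset_def that ..
  have same_count: "card (nbr V E z \<inter> ?X') = card (nbr V E z \<inter> X)" if "z \<noteq> u" "z \<noteq> v" for z
  proof -
    have "nbr V E z \<inter> ?X' = transpose u v ` (nbr V E z \<inter> X)"
      using same_type_nbr_transpose[OF G st \<open>u \<in> V\<close> \<open>v \<in> V\<close>, of z] that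
        transpose_image_exchange[OF u \<open>v \<notin> X\<close>] by (simp add: image_Int)
    then show ?thesis
      by (simp add: card_image)
  qed
  have u_active: "t u \<le> card (nbr V E u \<inter> ?X')"
  proof -
    have "t u \<le> card (nbr X E u \<inter> X)"
      using diffusion_supported[OF \<open>finite X\<close>, of u E t "{}"] u X by simp
    also have "\<dots> \<le> card (nbr V E u \<inter> ?X')"
      by (rule card_mono) (use \<open>finite V\<close> \<open>X \<subseteq> V\<close> irrefl in \<open>auto simp: nbr_def\<close>)
    finally show ?thesis .
  qed
  have "z \<in> Yset V E t ?X' \<longleftrightarrow> z \<in> insert u (Yset V E t X - {v})" for z
  proof (cases "z = u \<or> z = v")
    case True
    then show ?thesis
      using u_active \<open>u \<in> V\<close> u \<open>v \<notin> X\<close>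
      unfolding Yset_self_diffusing[OF X] Yset_self_diffusing[OF X'] by auto
  next
    case False
    then show ?thesis
      using same_count[of z]
      unfolding Yset_self_diffusing[OF X] Yset_self_diffusing[OF X'] by auto
  qed
  then have "Yset V E t ?X' = insert u (Yset V E t X - {v})"
    by blast
  moreover have "finite (Yset V E t X)" "u \<notin> Yset V E t X"
    using \<open>finite V\<close> u unfolding Yset_def by auto
  ultimately show ?thesis
    using v by (metis DiffE card_Suc_Diff1 card_insert_disjoint finite_Diff)
qed

lemma card_diffusion_exchange:
  assumes G: "threshold_graph V E t" and st: "same_type V E u v"
    and "u \<in> Y" and v: "v \<in> diffusion V E t Y" and "t v \<le> t u"
  shows "card (diffusion V E t (Y - {u} \<union> {v})) \<le> card (diffusion V E t Y)"
proof -
  let ?Y' = "Y - {u} \<union> {v}"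
  have "finite V"
    using G unfolding threshold_graph_def by auto
  have "v \<in> V - Y"
    using diffusion_subset v ..
  have fixed: "transpose u v x = x" if "x \<in> V - ?Y'" "x \<noteq> u" for x
    using that by simp
  have "transpose u v ` diffusion V E t ?Y' \<subseteq> diffusion V E t Y"
  proof (rule image_diffusion_subset)
    show "transpose u v ` (V - ?Y') \<subseteq> V - Y"
    proof (rule image_subsetI)
      fix x
      assume "x \<in> V - ?Y'"
      then show "transpose u v x \<in> V - Y"
        using fixed \<open>v \<in> V - Y\<close> by (cases "x = u") auto
    qed
    show "t (transpose u v x) \<le> t x" if "x \<in> V - ?Y'" for x
      using fixed[OF that] \<open>t v \<le> t u\<close> by (cases "x = u") auto
  qed (simp_all add: \<open>finite V\<close> same_type_adj_transpose[OF G st])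
  moreover have "finite (diffusion V E t Y)"
    using \<open>finite V\<close> diffusion_subset[of V E t Y] by (meson Diff_subset finite_subset)
  ultimately have "card (transpose u v ` diffusion V E t ?Y') \<le> card (diffusion V E t Y)"
    by (rule card_mono[rotated])
  then show ?thesis
    by (simp add: card_image)
qed

theorem proposition3:
  fixes V :: "'a set" and E :: "'a \<Rightarrow> 'a \<Rightarrow> bool" and t :: "'a \<Rightarrow> nat"
    and Vs :: "nat \<Rightarrow> 'a set" and nd i :: nat
  assumes G: "threshold_graph V E t"
    and P: "type_partition V E Vs nd"
    and i: "i \<in> {1..nd}"
  shows
    "(\<forall>X umax v. X \<subseteq> V \<and> X = diffusion X E t {}
        \<and> umax \<in> X \<inter> Vs i \<and> (\<forall>w \<in> X \<inter> Vs i. t w \<le> t umax)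
        \<and> v \<in> Yset V E t X \<inter> Vs i \<and> t v \<le> t umax
        \<longrightarrow> (let X' = (X - {umax}) \<union> {v} in
              X' = diffusion X' E t {} \<and> card (Yset V E t X') = card (Yset V E t X)))
     \<and>
     (\<forall>Y vmax u. Y \<subseteq> V
        \<and> vmax \<in> Y \<inter> Vs i \<and> (\<forall>w \<in> Y \<inter> Vs i. t w \<le> t vmax)
        \<and> u \<in> diffusion V E t Y \<inter> Vs i \<and> t u \<le> t vmax
        \<longrightarrow> card (diffusion V E t ((Y - {vmax}) \<union> {u})) \<le> card (diffusion V E t Y))"
proof -
  have st: "same_type V E a b" if "a \<in> Vs i" "b \<in> Vs i" for a b
    using P i that unfolding type_partition_def by blast
  have "finite V"
    using G unfolding threshold_graph_def by auto
  show ?thesis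
  proof (intro conjI allI impI)
    fix X umax v
    assume H: "X \<subseteq> V \<and> X = diffusion X E t {}
        \<and> umax \<in> X \<inter> Vs i \<and> (\<forall>w \<in> X \<inter> Vs i. t w \<le> t umax)
        \<and> v \<in> Yset V E t X \<inter> Vs i \<and> t v \<le> t umax"
    then have "finite X" "v \<notin> X"
      using \<open>finite V\<close> finite_subset unfolding Yset_def by auto
    with H show "let X' = (X - {umax}) \<union> {v} in
        X' = diffusion X' E t {} \<and> card (Yset V E t X') = card (Yset V E t X)"
      using self_diffusing_exchange[OF G st] card_Yset_exchange[OF G st] by (simp add: Let_def)
  next
    fix Y vmax u
    assume "Y \<subseteq> V \<and> vmax \<in> Y \<inter> Vs i \<and> (\<forall>w \<in> Y \<inter> Vs i. t w \<le> t vmax)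
        \<and> u \<in> diffusion V E t Y \<inter> Vs i \<and> t u \<le> t vmax"
    then show "card (diffusion V E t ((Y - {vmax}) \<union> {u})) \<le> card (diffusion V E t Y)"
      using card_diffusion_exchange[OF G st] by blast
  qed
qed

end
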